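(* Let $S$ be a modal left $E$-monoid. Then $S$ is an inductive left $E$-monoid if and only if for all $e,f\in E$ there exists $g\in E$ with $(e\cdot f)e\sim_r g$; in that case $e\wedge f=g$ (the meet in $(E,\le_r)$), and moreover $e\wedge f=e\wedge(e\cdot f)$ for all $e,f\in E$. If $S$ is an inductive left $E$-monoid and $E$ is right reduced, then $e\wedge f=(e\cdot f)e$ for all $e,f\in E$.
   Context: For a semigroup $S$, $E(S)$ is its set of idempotents; for $e,f\in E(S)$, $e\le_r f$ iff $e=ef$, and $e\sim_r f$ iff $e\le_r f$ and $f\le_r e$. $E\subseteq E(S)$ is right pre-reduced if $e=ef$ and $f=fe$ imply $e=f$ for $e,f\in E$; it is right reduced if for all $e,f\in E$, $e=ef$ implies $e=fe$. Let $S$ be a monoid and $1\in E\subseteq E(S)$. $S$ is a modal left $E$-monoid if $E$ is right pre-reduced and (I1') for all $t\in S$, $e\in E$ there is $t\cdot e\in E$ such that for all $s\in S$: $ste=st$ iff $s(t\cdot e)=s$; the (necessarily unique) map $(t,e)\mapsto t\cdot e$ is the left $E$-modal operation. $S$ is an inductive left $E$-monoid if it is a modal left $E$-monoid, $(E,\le_r)$ is a meet-semilattice with meet $\wedge$, and (I2') for $s\in S$, $e,f\in E$: $se=sf=s$ implies $s(e\wedge f)=s$. *)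

theory Defs
  imports Main
begin

definition idem :: "'a::monoid_mult \<Rightarrow> bool" where
  "idem e \<longleftrightarrow> e * e = e"

definition le_r :: "'a::monoid_mult \<Rightarrow> 'a \<Rightarrow> bool" where
  "le_r e f \<longleftrightarrow> e = e * f"

definition sim_r :: "'a::monoid_mult \<Rightarrow> 'a \<Rightarrow> bool" where
  "sim_r e f \<longleftrightarrow> le_r e f \<and> le_r f e"

definition right_pre_reduced :: "'a::monoid_mult set \<Rightarrow> bool" where
  "right_pre_reduced E \<longleftrightarrow> (\<forall>e\<in>E. \<forall>f\<in>E. e = e * f \<and> f = f * e \<longrightarrow> e = f)"

definition right_reduced :: "'a::monoid_mult set \<Rightarrow> bool" where
  "right_reduced E \<longleftrightarrow> (\<forall>e\<in>E. \<forall>f\<in>E. e = e * f \<longrightarrow> e = f * e)"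

text \<open>Condition (I1') for a candidate value g of t \<cdot> e.\<close>
definition modal_val :: "'a::monoid_mult set \<Rightarrow> 'a \<Rightarrow> 'a \<Rightarrow> 'a \<Rightarrow> bool" where
  "modal_val E t e g \<longleftrightarrow> g \<in> E \<and> (\<forall>s. s * t * e = s * t \<longleftrightarrow> s * g = s)"

definition modal_left_E_monoid :: "'a::monoid_mult set \<Rightarrow> bool" where
  "modal_left_E_monoid E \<longleftrightarrow>
     1 \<in> E \<and> (\<forall>e\<in>E. idem e) \<and> right_pre_reduced E \<and>
     (\<forall>t. \<forall>e\<in>E. \<exists>g. modal_val E t e g)"

definition modal_dot :: "'a::monoid_mult set \<Rightarrow> 'a \<Rightarrow> 'a \<Rightarrow> 'a" where
  "modal_dot E t e = (THE g. modal_val E t e g)"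

definition is_meet :: "'a::monoid_mult set \<Rightarrow> 'a \<Rightarrow> 'a \<Rightarrow> 'a \<Rightarrow> bool" where
  "is_meet E e f m \<longleftrightarrow> m \<in> E \<and> le_r m e \<and> le_r m f \<and>
     (\<forall>h\<in>E. le_r h e \<and> le_r h f \<longrightarrow> le_r h m)"

definition meet_r :: "'a::monoid_mult set \<Rightarrow> 'a \<Rightarrow> 'a \<Rightarrow> 'a" where
  "meet_r E e f = (THE m. is_meet E e f m)"

definition meet_semilattice_r :: "'a::monoid_mult set \<Rightarrow> bool" where
  "meet_semilattice_r E \<longleftrightarrow>
     (\<forall>e\<in>E. le_r e e) \<and>
     (\<forall>e\<in>E. \<forall>f\<in>E. \<forall>g\<in>E. le_r e f \<and> le_r f g \<longrightarrow> le_r e g) \<and>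
     (\<forall>e\<in>E. \<forall>f\<in>E. le_r e f \<and> le_r f e \<longrightarrow> e = f) \<and>
     (\<forall>e\<in>E. \<forall>f\<in>E. \<exists>m. is_meet E e f m)"

definition inductive_left_E_monoid :: "'a::monoid_mult set \<Rightarrow> bool" where
  "inductive_left_E_monoid E \<longleftrightarrow>
     modal_left_E_monoid E \<and> meet_semilattice_r E \<and>
     (\<forall>s. \<forall>e\<in>E. \<forall>f\<in>E. s * e = s \<and> s * f = s \<longrightarrow> s * meet_r E e f = s)"

end

theory Submission
  imports Defs
begin

text \<open>In the preorder \<open>\<le>\<^sub>r\<close> on all of S, condition (I1') says that \<open>s \<le>\<^sub>r t \<cdot> e\<close> iff
  \<open>s t \<le>\<^sub>r e\<close>. From this, \<open>h = (e \<cdot> f) e\<close> is a greatest lower bound of e and f in S. So e and f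
  have a meet in E exactly when some \<open>g \<in> E\<close> is \<open>\<sim>\<^sub>r\<close>-equivalent to h, and then g is that meet;
  (I2') is transitivity of \<open>\<le>\<^sub>r\<close> through h. The meet of e and f is also the meet of e and
  \<open>e \<cdot> f\<close>, since below e, being below f and below \<open>e \<cdot> f\<close> coincide. If E is right reduced,
  the meet m satisfies \<open>e m = m = (e \<cdot> f) m\<close>, whence \<open>h = h m = m\<close>.\<close>

lemma le_r_iff: "le_r e f \<longleftrightarrow> e * f = e"
  unfolding le_r_def by auto

lemma le_r_trans: "le_r e f \<Longrightarrow> le_r f g \<Longrightarrow> le_r e g"
  unfolding le_r_def by (metis mult.assoc)

lemma le_r_mult: "le_r k a \<Longrightarrow> le_r k b \<Longrightarrow> le_r k (a * b)"
  unfolding le_r_def by (metis mult.assoc)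

lemma modal_left_E_monoid_le_r_refl:
  "modal_left_E_monoid E \<Longrightarrow> e \<in> E \<Longrightarrow> le_r e e"
  unfolding modal_left_E_monoid_def idem_def le_r_def by auto

lemma modal_left_E_monoid_le_r_antisym:
  "modal_left_E_monoid E \<Longrightarrow> e \<in> E \<Longrightarrow> f \<in> E \<Longrightarrow> le_r e f \<Longrightarrow> le_r f e \<Longrightarrow> e = f"
  unfolding modal_left_E_monoid_def right_pre_reduced_def le_r_def by blast

lemma modal_val_le_r_iff:
  "modal_val E t e g \<Longrightarrow> le_r s g \<longleftrightarrow> le_r (s * t) e"
  unfolding modal_val_def le_r_iff by auto

lemma modal_val_unique:
  assumes M: "modal_left_E_monoid E" and g: "modal_val E t e g" and g': "modal_val E t e g'"
  shows "g = g'"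
proof -
  have E: "g \<in> E" "g' \<in> E" using g g' unfolding modal_val_def by auto
  have "le_r g g'" "le_r g' g"
    using modal_val_le_r_iff[OF g] modal_val_le_r_iff[OF g']
      modal_left_E_monoid_le_r_refl[OF M] E by blast+
  then show ?thesis using modal_left_E_monoid_le_r_antisym[OF M] E by blast
qed

lemma modal_val_modal_dot:
  assumes M: "modal_left_E_monoid E" and e: "e \<in> E"
  shows "modal_val E t e (modal_dot E t e)"
proof -
  obtain g where g: "modal_val E t e g" using M e unfolding modal_left_E_monoid_def by blast
  show ?thesis
    unfolding modal_dot_def by (rule theI[where P = "modal_val E t e", OF g modal_val_unique[OF M _ g]])
qed

lemma modal_dot_in:
  "modal_left_E_monoid E \<Longrightarrow> e \<in> E \<Longrightarrow> modal_dot E t e \<in> E"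
  using modal_val_modal_dot unfolding modal_val_def by blast

lemma le_r_modal_dot_iff:
  "modal_left_E_monoid E \<Longrightarrow> e \<in> E \<Longrightarrow> le_r s (modal_dot E t e) \<longleftrightarrow> le_r (s * t) e"
  using modal_val_modal_dot modal_val_le_r_iff by blast

lemma le_r_modal_dot_if_lower_bound:
  assumes M: "modal_left_E_monoid E" and f: "f \<in> E" and ke: "le_r k e" and kf: "le_r k f"
  shows "le_r k (modal_dot E e f)"
proof -
  have "k * e = k" using ke by (simp add: le_r_iff)
  then show ?thesis using le_r_modal_dot_iff[OF M f] kf by simp
qed

lemma modal_dot_mult_le_r_left:
  "modal_left_E_monoid E \<Longrightarrow> e \<in> E \<Longrightarrow> le_r (modal_dot E e f * e) e"
  using modal_left_E_monoid_le_r_refl unfolding le_r_def by (metis mult.assoc)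

lemma modal_dot_mult_le_r_right:
  assumes M: "modal_left_E_monoid E" and f: "f \<in> E"
  shows "le_r (modal_dot E e f * e) f"
  using le_r_modal_dot_iff[OF M f] modal_left_E_monoid_le_r_refl[OF M modal_dot_in[OF M f]]
  by blast

lemma le_r_modal_dot_mult_if_lower_bound:
  assumes M: "modal_left_E_monoid E" and f: "f \<in> E" and ke: "le_r k e" and kf: "le_r k f"
  shows "le_r k (modal_dot E e f * e)"
  using le_r_mult[OF le_r_modal_dot_if_lower_bound[OF M f ke kf] ke] .

lemma meet_r_eqI:
  assumes M: "modal_left_E_monoid E" and m: "is_meet E e f m"
  shows "meet_r E e f = m"
proof -
  have unique: "m' = m" if m': "is_meet E e f m'" for m'
    using m m' modal_left_E_monoid_le_r_antisym[OF M] unfolding is_meet_def by blast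
  show ?thesis unfolding meet_r_def by (rule the_equality[where P = "is_meet E e f", OF m unique])
qed

lemma is_meet_if_sim_r_modal_dot_mult:
  assumes M: "modal_left_E_monoid E" and e: "e \<in> E" and f: "f \<in> E" and g: "g \<in> E"
    and sim: "sim_r (modal_dot E e f * e) g"
  shows "is_meet E e f g"
proof -
  let ?h = "modal_dot E e f * e"
  have gh: "le_r g ?h" and hg: "le_r ?h g" using sim unfolding sim_r_def by blast+
  have "le_r g e" using le_r_trans[OF gh modal_dot_mult_le_r_left[OF M e]] .
  moreover have "le_r g f" using le_r_trans[OF gh modal_dot_mult_le_r_right[OF M f]] .
  moreover have "le_r k g" if "le_r k e" "le_r k f" for k
    using le_r_trans[OF le_r_modal_dot_mult_if_lower_bound[OF M f that] hg] .
  ultimately show ?thesis unfolding is_meet_def using g by blast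
qed

lemma meet_semilattice_r_iff_meets_exist:
  assumes M: "modal_left_E_monoid E"
  shows "meet_semilattice_r E \<longleftrightarrow> (\<forall>e\<in>E. \<forall>f\<in>E. \<exists>m. is_meet E e f m)"
proof -
  have "\<forall>e\<in>E. le_r e e" using modal_left_E_monoid_le_r_refl[OF M] by blast
  moreover have "\<forall>e\<in>E. \<forall>f\<in>E. \<forall>g\<in>E. le_r e f \<and> le_r f g \<longrightarrow> le_r e g"
    by (metis le_r_trans)
  moreover have "\<forall>e\<in>E. \<forall>f\<in>E. le_r e f \<and> le_r f e \<longrightarrow> e = f"
    by (auto intro: modal_left_E_monoid_le_r_antisym[OF M])
  ultimately show ?thesis unfolding meet_semilattice_r_def by argo
qed

lemma inductive_left_E_monoid_modal:
  "inductive_left_E_monoid E \<Longrightarrow> modal_left_E_monoid E"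
  unfolding inductive_left_E_monoid_def by blast

lemma is_meet_meet_r:
  assumes I: "inductive_left_E_monoid E" and e: "e \<in> E" and f: "f \<in> E"
  shows "is_meet E e f (meet_r E e f)"
proof -
  obtain m where "is_meet E e f m"
    using I e f unfolding inductive_left_E_monoid_def meet_semilattice_r_def by blast
  then show ?thesis using meet_r_eqI[OF inductive_left_E_monoid_modal[OF I]] by simp
qed

lemma le_r_meet_r:
  assumes I: "inductive_left_E_monoid E" and e: "e \<in> E" and f: "f \<in> E"
    and se: "le_r s e" and sf: "le_r s f"
  shows "le_r s (meet_r E e f)"
  using I e f se sf unfolding inductive_left_E_monoid_def le_r_iff by blast

lemma sim_r_modal_dot_mult_meet_r:
  assumes I: "inductive_left_E_monoid E" and e: "e \<in> E" and f: "f \<in> E"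
  shows "sim_r (modal_dot E e f * e) (meet_r E e f)"
proof -
  note M = inductive_left_E_monoid_modal[OF I]
  have "le_r (meet_r E e f) (modal_dot E e f * e)"
    using is_meet_meet_r[OF I e f] le_r_modal_dot_mult_if_lower_bound[OF M f]
    unfolding is_meet_def by blast
  moreover have "le_r (modal_dot E e f * e) (meet_r E e f)"
    using le_r_meet_r[OF I e f] modal_dot_mult_le_r_left[OF M e] modal_dot_mult_le_r_right[OF M f]
    by blast
  ultimately show ?thesis unfolding sim_r_def by blast
qed

lemma inductive_left_E_monoid_iff_sim_r_modal_dot_mult:
  assumes M: "modal_left_E_monoid E"
  shows "inductive_left_E_monoid E \<longleftrightarrow>
           (\<forall>e\<in>E. \<forall>f\<in>E. \<exists>g\<in>E. sim_r (modal_dot E e f * e) g)"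
proof
  assume "inductive_left_E_monoid E"
  then show "\<forall>e\<in>E. \<forall>f\<in>E. \<exists>g\<in>E. sim_r (modal_dot E e f * e) g"
    using sim_r_modal_dot_mult_meet_r is_meet_meet_r unfolding is_meet_def by blast
next
  assume H: "\<forall>e\<in>E. \<forall>f\<in>E. \<exists>g\<in>E. sim_r (modal_dot E e f * e) g"
  have meets: "\<forall>e\<in>E. \<forall>f\<in>E. \<exists>m. is_meet E e f m"
    using H is_meet_if_sim_r_modal_dot_mult[OF M] by blast
  have "le_r s (meet_r E e f)" if e: "e \<in> E" and f: "f \<in> E" and "le_r s e" "le_r s f"
    for s e f
  proof -
    obtain g where g: "g \<in> E" "sim_r (modal_dot E e f * e) g" using H e f by blast
    have "le_r s (modal_dot E e f * e)"
      using le_r_modal_dot_mult_if_lower_bound[OF M f] that(3,4) .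
    then have "le_r s g" using g(2) le_r_trans unfolding sim_r_def by blast
    then show ?thesis
      using meet_r_eqI[OF M is_meet_if_sim_r_modal_dot_mult[OF M e f g]] by simp
  qed
  then show "inductive_left_E_monoid E"
    unfolding inductive_left_E_monoid_def
    using M meet_semilattice_r_iff_meets_exist[OF M] meets by (auto simp: le_r_iff)
qed

lemma meet_r_modal_dot:
  assumes I: "inductive_left_E_monoid E" and e: "e \<in> E" and f: "f \<in> E"
  shows "meet_r E e f = meet_r E e (modal_dot E e f)"
proof -
  note M = inductive_left_E_monoid_modal[OF I]
  have below_f_iff: "le_r k f \<longleftrightarrow> le_r k (modal_dot E e f)" if "le_r k e" for k
    using le_r_modal_dot_iff[OF M f] that by (simp add: le_r_iff)
  have "is_meet E e (modal_dot E e f) (meet_r E e f)"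
    using is_meet_meet_r[OF I e f] below_f_iff unfolding is_meet_def by blast
  then show ?thesis using meet_r_eqI[OF M] by simp
qed

lemma meet_r_eq_modal_dot_mult_if_right_reduced:
  assumes I: "inductive_left_E_monoid E" and R: "right_reduced E" and e: "e \<in> E" and f: "f \<in> E"
  shows "meet_r E e f = modal_dot E e f * e"
proof -
  note M = inductive_left_E_monoid_modal[OF I]
  define d where "d = modal_dot E e f"
  define m where "m = meet_r E e f"
  have m: "m \<in> E" "le_r m e" "le_r m f"
    using is_meet_meet_r[OF I e f] unfolding m_def is_meet_def by blast+
  have "le_r m d" unfolding d_def using le_r_modal_dot_if_lower_bound[OF M f m(2,3)] .
  then have "d * m = m" "e * m = m"
    using R m modal_dot_in[OF M f] e unfolding right_reduced_def le_r_def d_def by metis+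
  have "d * e = d * e * m"
    using sim_r_modal_dot_mult_meet_r[OF I e f] unfolding sim_r_def le_r_def d_def m_def by blast
  also have "\<dots> = m" using \<open>d * m = m\<close> \<open>e * m = m\<close> by (simp add: mult.assoc)
  finally show ?thesis unfolding d_def m_def by simp
qed

theorem proposition5p7:
  fixes E :: "'a::monoid_mult set"
  assumes "modal_left_E_monoid E"
  shows "(inductive_left_E_monoid E \<longleftrightarrow>
            (\<forall>e\<in>E. \<forall>f\<in>E. \<exists>g\<in>E. sim_r (modal_dot E e f * e) g))
       \<and> (inductive_left_E_monoid E \<longrightarrow>
            (\<forall>e\<in>E. \<forall>f\<in>E. \<forall>g\<in>E. sim_r (modal_dot E e f * e) g \<longrightarrow> meet_r E e f = g)
          \<and> (\<forall>e\<in>E. \<forall>f\<in>E. meet_r E e f = meet_r E e (modal_dot E e f)))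
       \<and> (inductive_left_E_monoid E \<and> right_reduced E \<longrightarrow>
            (\<forall>e\<in>E. \<forall>f\<in>E. meet_r E e f = modal_dot E e f * e))"
proof (intro conjI impI)
  show "inductive_left_E_monoid E \<longleftrightarrow>
          (\<forall>e\<in>E. \<forall>f\<in>E. \<exists>g\<in>E. sim_r (modal_dot E e f * e) g)"
    using inductive_left_E_monoid_iff_sim_r_modal_dot_mult[OF assms] .
  show "\<forall>e\<in>E. \<forall>f\<in>E. \<forall>g\<in>E. sim_r (modal_dot E e f * e) g \<longrightarrow> meet_r E e f = g"
    using meet_r_eqI[OF assms] is_meet_if_sim_r_modal_dot_mult[OF assms] by blast
  show "\<forall>e\<in>E. \<forall>f\<in>E. meet_r E e f = meet_r E e (modal_dot E e f)"
    if "inductive_left_E_monoid E"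
    using meet_r_modal_dot[OF that] by blast
  show "\<forall>e\<in>E. \<forall>f\<in>E. meet_r E e f = modal_dot E e f * e"
    if "inductive_left_E_monoid E \<and> right_reduced E"
    using meet_r_eq_modal_dot_mult_if_right_reduced that by blast
qed

end
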